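(* Let $\phi:\mathcal{F}\to\mathbb{R}$ be any function, $\delta\in(0,1)$, $\epsilon_4:=2B_{\text{ref}}\sqrt{\frac{\log(\delta^{-1})}{2n}}$, and $\hat a_-(\epsilon_4):=\min_{f\in\hat{\mathcal{R}}(\epsilon_4)}\phi(f)$, $\hat a_+(\epsilon_4):=\max_{f\in\hat{\mathcal{R}}(\epsilon_4)}\phi(f)$. Let $f^\star\in\mathcal{F}$ be the unique minimizer of $e_{\text{orig}}$ over $\mathcal{F}$. If $f^\star$ satisfies $|L(f^\star,z)-L(f_{\text{ref}},z)|\le B_{\text{ref}}$ for all $z\in\mathcal{Z}$, then $$\mathbb{P}\{\phi(f^\star)\in[\hat a_-(\epsilon_4),\hat a_+(\epsilon_4)]\}\ge1-\delta.$$
   Context: Let $Z$ be a random variable on $\mathcal{Z}=\mathcal{Y}\times\mathcal{X}$; $\mathcal{F}$ a set of measurable functions $\mathcal{X}\to\mathcal{Y}$; $L:\mathcal{F}\times\mathcal{Z}\to\mathbb{R}_{\ge0}$ a nonnegative loss; data are $n\ge2$ i.i.d. copies $Z_1,\dots,Z_n$ of $Z$. $e_{\text{orig}}(f)=\mathbb{E}L(f,Z)$, $\hat e_{\text{orig}}(f)=\frac1n\sum_iL(f,Z_i)$. A reference model $f_{\text{ref}}\in\mathcal{F}$ is fixed in advance (not data dependent), and $\hat{\mathcal{R}}(\epsilon)=\{f_{\text{ref}}\}\cup\{f\in\mathcal{F}:\hat e_{\text{orig}}(f)\le\hat e_{\text{orig}}(f_{\text{ref}})+\epsilon\}$. The minima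 and maxima above are assumed to exist. *)

theory Defs
  imports "HOL-Probability.Probability"
begin

definition emp_risk ::
  "(('x \<Rightarrow> 'y) \<Rightarrow> ('y \<times> 'x) \<Rightarrow> real) \<Rightarrow> nat \<Rightarrow> (nat \<Rightarrow> 'w \<Rightarrow> 'y \<times> 'x)
     \<Rightarrow> ('x \<Rightarrow> 'y) \<Rightarrow> 'w \<Rightarrow> real" where
  "emp_risk L n Zs f w = (\<Sum>i<n. L f (Zs i w)) / real n"

definition true_risk ::
  "'w measure \<Rightarrow> (('x \<Rightarrow> 'y) \<Rightarrow> ('y \<times> 'x) \<Rightarrow> real) \<Rightarrow> ('w \<Rightarrow> 'y \<times> 'x)
     \<Rightarrow> ('x \<Rightarrow> 'y) \<Rightarrow> ennreal" where
  "true_risk M L Z f = (\<integral>\<^sup>+ w. ennreal (L f (Z w)) \<partial>M)"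

definition rashomon ::
  "('x \<Rightarrow> 'y) set \<Rightarrow> (('x \<Rightarrow> 'y) \<Rightarrow> ('y \<times> 'x) \<Rightarrow> real) \<Rightarrow> nat \<Rightarrow> (nat \<Rightarrow> 'w \<Rightarrow> 'y \<times> 'x)
     \<Rightarrow> ('x \<Rightarrow> 'y) \<Rightarrow> real \<Rightarrow> 'w \<Rightarrow> ('x \<Rightarrow> 'y) set" where
  "rashomon F L n Zs fref \<epsilon> w =
     {fref} \<union> {f \<in> F. emp_risk L n Zs f w \<le> emp_risk L n Zs fref w + \<epsilon>}"

end

theory Submission
  imports Defs
begin

text \<open>On the event that the empirical risk of \<open>f\<^sup>\<star>\<close> exceeds that of \<open>f_ref\<close> by at most
  \<open>\<epsilon>\<^sub>4\<close>, the model \<open>f\<^sup>\<star>\<close> lies in the empirical Rashomon set, so \<open>\<phi> f\<^sup>\<star>\<close> lies between the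
  minimum and maximum of \<open>\<phi>\<close> over that set. The complementary event is a large upper deviation
  of a sum of \<open>n\<close> i.i.d. variables \<open>L(f\<^sup>\<star>, Z\<^sub>i) - L(f_ref, Z\<^sub>i)\<close> with values in \<open>[-B, B]\<close>
  and nonpositive mean (since \<open>f\<^sup>\<star>\<close> minimises the true risk), and \<open>\<epsilon>\<^sub>4\<close> is exactly the
  radius at which Hoeffding's inequality bounds its probability by \<open>\<delta>\<close>.\<close>

lemma (in prob_space) expectation_diff_nonpos_of_nn_integral_less:
  fixes u v :: "'a \<Rightarrow> real"
  assumes [measurable]: "u \<in> borel_measurable M" "v \<in> borel_measurable M"
    and nonneg: "\<And>x. 0 \<le> u x" "\<And>x. 0 \<le> v x"
    and bounded_diff: "\<And>x. \<bar>u x - v x\<bar> \<le> B"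
    and less: "(\<integral>\<^sup>+ x. ennreal (u x) \<partial>M) < (\<integral>\<^sup>+ x. ennreal (v x) \<partial>M)"
  shows "expectation (\<lambda>x. u x - v x) \<le> 0"
proof -
  have "(\<integral>\<^sup>+ x. ennreal (u x) \<partial>M) < \<infinity>"
    using less top.not_eq_extremum by fastforce
  then have int_u: "integrable M u"
    using nonneg by (intro integrableI_nonneg) (auto simp: less_top)
  have int_v: "integrable M v"
  proof (rule Bochner_Integration.integrable_bound)
    show "integrable M (\<lambda>x. u x + B)" using int_u by simp
    show "AE x in M. norm (v x) \<le> norm (u x + B)"
      using nonneg bounded_diff by (intro AE_I2) (smt (verit) real_norm_def)
  qed simp
  have "ennreal (expectation u) < ennreal (expectation v)"
    using less int_u int_v nonneg by (simp add: nn_integral_eq_integral)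
  moreover have "0 \<le> expectation u" using nonneg by simp
  ultimately have "expectation u \<le> expectation v"
    by (simp add: ennreal_less_iff)
  then show ?thesis using int_u int_v by simp
qed

lemma iid_interval_bounded_random_variables_compose:
  assumes M: "prob_space M"
    and fin: "finite I"
    and Z: "Z \<in> measurable M S"
    and Zs: "\<And>i. i \<in> I \<Longrightarrow> Zs i \<in> measurable M S \<and> distr M S (Zs i) = distr M S Z"
    and indep: "prob_space.indep_vars M (\<lambda>_. S) Zs I"
    and D: "D \<in> borel_measurable S"
    and range: "\<And>z. D z \<in> {a..b}"
  shows "iid_interval_bounded_random_variables M I (\<lambda>i w. D (Zs i w)) (\<lambda>w. D (Z w)) a b"
proof -
  interpret prob_space M by (rule M)
  show ?thesis
  proof
    show "indep_vars (\<lambda>_. borel) (\<lambda>i w. D (Zs i w)) I"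
      using indep D by (rule indep_vars_compose2)
    fix i assume i: "i \<in> I"
    have "distr M borel (\<lambda>w. D (Zs i w)) = distr (distr M S (Zs i)) borel D"
      using i Zs D by (subst distr_distr) (auto simp: comp_def)
    also have "\<dots> = distr (distr M S Z) borel D" using i Zs by simp
    also have "\<dots> = distr M borel (\<lambda>w. D (Z w))"
      using Z D by (subst distr_distr) (auto simp: comp_def)
    finally show "distr M borel (\<lambda>w. D (Zs i w)) = distr M borel (\<lambda>w. D (Z w))" .
  qed (use fin Z D range in auto)
qed

lemma (in Hoeffding_ineq_iid) Hoeffding_ineq_ge_confidence:
  assumes mean: "\<mu> \<le> 0" and "a < b" "I \<noteq> {}" and \<delta>: "0 < \<delta>" "\<delta> \<le> 1"
  defines "n \<equiv> real (card I)"
  shows "prob {x\<in>space M. (\<Sum>i\<in>I. X i x) \<ge> n * ((b - a) * sqrt (ln (1 / \<delta>) / (2 * n)))} \<le> \<delta>"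
proof -
  define t where "t = (b - a) * sqrt (ln (1 / \<delta>) / (2 * n))"
  have n: "n > 0" using \<open>I \<noteq> {}\<close> fin by (simp add: n_def card_gt_0_iff)
  have ln_nonneg: "ln (1 / \<delta>) \<ge> 0" using \<delta> by simp
  have t: "n * t \<ge> 0" using n ln_nonneg \<open>a < b\<close> by (simp add: t_def)
  have "prob {x\<in>space M. (\<Sum>i\<in>I. X i x) \<ge> n * t}
        \<le> prob {x\<in>space M. (\<Sum>i\<in>I. X i x) \<ge> n * \<mu> + n * t}"
    using mean n by (intro finite_measure_mono) (auto intro: order_trans[rotated] simp: mult_nonneg_nonpos)
  also have "\<dots> \<le> exp (-2 * (n * t)\<^sup>2 / (n * (b - a)\<^sup>2))"
    using Hoeffding_ineq_ge[OF t \<open>a < b\<close> \<open>I \<noteq> {}\<close>] by (simp add: n_def)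
  also have "-2 * (n * t)\<^sup>2 / (n * (b - a)\<^sup>2) = - ln (1 / \<delta>)"
  proof -
    have "(n * t)\<^sup>2 = n\<^sup>2 * (b - a)\<^sup>2 * (sqrt (ln (1 / \<delta>) / (2 * n)))\<^sup>2"
      by (simp add: t_def power_mult_distrib)
    also have "\<dots> = n * (b - a)\<^sup>2 * ln (1 / \<delta>) / 2"
      using n ln_nonneg by (simp add: power2_eq_square[of n])
    finally show ?thesis
      using n \<open>a < b\<close> by (simp add: field_simps)
  qed
  also have "exp (- ln (1 / \<delta>)) = \<delta>" using \<delta> by (simp add: ln_div)
  finally show ?thesis by (simp add: t_def)
qed

lemma (in Hoeffding_ineq_iid) Hoeffding_ineq_gt_confidence:
  assumes mean: "\<mu> \<le> 0" and "a \<le> b" "I \<noteq> {}" and \<delta>: "0 < \<delta>" "\<delta> \<le> 1"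
  defines "n \<equiv> real (card I)"
  shows "prob {x\<in>space M. (\<Sum>i\<in>I. X i x) > n * ((b - a) * sqrt (ln (1 / \<delta>) / (2 * n)))} \<le> \<delta>"
proof (cases "a < b")
  case True
  define r where "r = n * ((b - a) * sqrt (ln (1 / \<delta>) / (2 * n)))"
  have "prob {x\<in>space M. (\<Sum>i\<in>I. X i x) > r} \<le> prob {x\<in>space M. (\<Sum>i\<in>I. X i x) \<ge> r}"
    by (intro finite_measure_mono) auto
  also have "\<dots> \<le> \<delta>"
    using Hoeffding_ineq_ge_confidence[OF mean True \<open>I \<noteq> {}\<close> \<delta>] by (simp add: r_def n_def)
  finally show ?thesis by (simp add: r_def)
next
  case False
  then have "a = b" using \<open>a \<le> b\<close> by simp
  have AE_const: "AE x in M. \<forall>i\<in>I. X i x = a"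
    using X.AE_in_interval fin \<open>a = b\<close> by (auto simp: AE_finite_all)
  obtain i where "i \<in> I" using \<open>I \<noteq> {}\<close> by blast
  then have "AE x in M. X i x = a" using AE_const by auto
  then have "expectation (X i) = expectation (\<lambda>_. a)"
    using \<open>i \<in> I\<close> by (intro integral_cong_AE) auto
  then have "\<mu> = a"
    using expectation_X[OF \<open>i \<in> I\<close>] by (simp add: \<mu>_def prob_space)
  \<comment> \<open>the sum is almost surely the constant \<open>n * a \<le> 0\<close>, and the radius is \<open>0\<close>\<close>
  have "AE x in M. \<not> (\<Sum>i\<in>I. X i x) > n * ((b - a) * sqrt (ln (1 / \<delta>) / (2 * n)))"
    using AE_const by eventually_elim (use mean \<open>\<mu> = a\<close> \<open>a = b\<close> in \<open>simp add: n_def mult_nonneg_nonpos not_less\<close>)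
  then show ?thesis
    using prob_eq_0_AE \<delta> by simp
qed

lemma prob_sum_iid_copies_gt_confidence:
  assumes M: "prob_space M"
    and Z: "Z \<in> measurable M S"
    and Zs: "\<And>i. i < n \<Longrightarrow> Zs i \<in> measurable M S \<and> distr M S (Zs i) = distr M S Z"
    and indep: "prob_space.indep_vars M (\<lambda>_. S) Zs {..<n}"
    and "n > 0"
    and D: "D \<in> borel_measurable S"
    and range: "\<And>z. D z \<in> {-B..B}"
    and mean: "prob_space.expectation M (\<lambda>w. D (Z w)) \<le> 0"
    and \<delta>: "0 < \<delta>" "\<delta> \<le> 1"
  shows "measure M {w\<in>space M. real n * (2 * B * sqrt (ln (1 / \<delta>) / (2 * real n))) < (\<Sum>i<n. D (Zs i w))}
           \<le> \<delta>"
proof -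
  have "iid_interval_bounded_random_variables M {..<n} (\<lambda>i w. D (Zs i w)) (\<lambda>w. D (Z w)) (-B) B"
    using Zs D range by (intro iid_interval_bounded_random_variables_compose[OF M _ Z _ indep]) auto
  then interpret Hoeffding_ineq_iid M "{..<n}" "\<lambda>i w. D (Zs i w)" "\<lambda>w. D (Z w)" "-B" B
      "prob_space.expectation M (\<lambda>w. D (Z w))"
    by (simp add: Hoeffding_ineq_iid_def)
  have "-B \<le> B" using range by (meson atLeastAtMost_iff order_trans)
  then show ?thesis
    using Hoeffding_ineq_gt_confidence[OF mean _ _ \<delta>] \<open>n > 0\<close> by (simp add: lessThan_empty_iff)
qed

lemma mem_rashomon_if_sum_diff_le:
  assumes "f \<in> F" "n > 0"
    and "(\<Sum>i<n. L f (Zs i w) - L fref (Zs i w)) \<le> real n * \<epsilon>"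
  shows "f \<in> rashomon F L n Zs fref \<epsilon> w"
  using assms by (simp add: rashomon_def emp_risk_def sum_subtractf field_simps)

lemma Inf_image_le_le_Sup_image_if_attained:
  fixes \<phi> :: "'a \<Rightarrow> 'b::conditionally_complete_lattice"
  assumes "x \<in> A" "\<exists>f\<in>A. \<forall>g\<in>A. \<phi> f \<le> \<phi> g" "\<exists>f\<in>A. \<forall>g\<in>A. \<phi> g \<le> \<phi> f"
  shows "Inf (\<phi> ` A) \<le> \<phi> x \<and> \<phi> x \<le> Sup (\<phi> ` A)"
proof -
  have "bdd_below (\<phi> ` A)" "bdd_above (\<phi> ` A)"
    using assms by (fastforce intro: bdd_belowI2 bdd_aboveI2)+
  then show ?thesis
    using \<open>x \<in> A\<close> by (auto intro: cInf_lower cSup_upper)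
qed

theorem proposition11:
  fixes M :: "'w measure" and S :: "('y \<times> 'x) measure"
    and Z :: "'w \<Rightarrow> 'y \<times> 'x" and Zs :: "nat \<Rightarrow> 'w \<Rightarrow> 'y \<times> 'x"
    and F :: "('x \<Rightarrow> 'y) set" and L :: "('x \<Rightarrow> 'y) \<Rightarrow> ('y \<times> 'x) \<Rightarrow> real"
    and fref fstar :: "'x \<Rightarrow> 'y" and \<phi> :: "('x \<Rightarrow> 'y) \<Rightarrow> real"
    and \<delta> B :: real and n :: nat
  assumes M: "prob_space M"
    and Z: "Z \<in> measurable M S"
    and Zs: "\<forall>i<n. Zs i \<in> measurable M S \<and> distr M S (Zs i) = distr M S Z"
    and indep: "prob_space.indep_vars M (\<lambda>_. S) Zs {..<n}"
    and n: "n \<ge> 2"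
    and L_nonneg: "\<forall>f\<in>F. \<forall>z. L f z \<ge> 0"
    and L_meas: "\<forall>f\<in>F. L f \<in> borel_measurable S"
    and fref: "fref \<in> F"
    and \<delta>: "0 < \<delta>" "\<delta> < 1"
    and fstar: "fstar \<in> F"
    and fstar_unique_min: "\<forall>f\<in>F. f \<noteq> fstar \<longrightarrow> true_risk M L Z fstar < true_risk M L Z f"
    and bound: "\<forall>z. \<bar>L fstar z - L fref z\<bar> \<le> B"
    and min_ex: "\<forall>w\<in>space M. \<exists>f\<in>rashomon F L n Zs fref (2 * B * sqrt (ln (1 / \<delta>) / (2 * real n))) w.
                   \<forall>g\<in>rashomon F L n Zs fref (2 * B * sqrt (ln (1 / \<delta>) / (2 * real n))) w. \<phi> f \<le> \<phi> g"
    and max_ex: "\<forall>w\<in>space M. \<exists>f\<in>rashomon F L n Zs fref (2 * B * sqrt (ln (1 / \<delta>) / (2 * real n))) w.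
                   \<forall>g\<in>rashomon F L n Zs fref (2 * B * sqrt (ln (1 / \<delta>) / (2 * real n))) w. \<phi> g \<le> \<phi> f"
  shows "\<exists>A\<in>sets M.
           A \<subseteq> {w \<in> space M.
                  Inf (\<phi> ` rashomon F L n Zs fref (2 * B * sqrt (ln (1 / \<delta>) / (2 * real n))) w) \<le> \<phi> fstar \<and>
                  \<phi> fstar \<le> Sup (\<phi> ` rashomon F L n Zs fref (2 * B * sqrt (ln (1 / \<delta>) / (2 * real n))) w)}
           \<and> measure M A \<ge> 1 - \<delta>"
proof -
  interpret prob_space M by (rule M)
  define \<epsilon> where "\<epsilon> = 2 * B * sqrt (ln (1 / \<delta>) / (2 * real n))"
  define D where "D = (\<lambda>z. L fstar z - L fref z)"
  define bad where "bad = {w\<in>space M. real n * \<epsilon> < (\<Sum>i<n. D (Zs i w))}"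
  have D_meas[measurable]: "D \<in> borel_measurable S"
    using L_meas fstar fref by (simp add: D_def borel_measurable_diff)
  have D_range: "D z \<in> {-B..B}" for z
    using bound[rule_format, of z] by (auto simp: D_def abs_le_iff)
  have [measurable]: "Zs i \<in> measurable M S" if "i < n" for i
    using Zs that by simp
  have bad_sets: "bad \<in> sets M" unfolding bad_def by measurable
  have "expectation (\<lambda>w. D (Z w)) \<le> 0"
  proof (cases "fref = fstar")
    case False
    with fstar_unique_min fref show ?thesis
      unfolding D_def true_risk_def using L_nonneg L_meas fstar bound Z
      by (intro expectation_diff_nonpos_of_nn_integral_less[where B = B]) (auto simp del: split_paired_All)
  qed (simp add: D_def)
  then have "prob bad \<le> \<delta>"
    unfolding bad_def \<epsilon>_def using Zs n \<delta>
    by (intro prob_sum_iid_copies_gt_confidence[OF M Z _ indep _ D_meas D_range]) auto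
  moreover have "space M - bad \<subseteq> {w \<in> space M.
      Inf (\<phi> ` rashomon F L n Zs fref \<epsilon> w) \<le> \<phi> fstar \<and> \<phi> fstar \<le> Sup (\<phi> ` rashomon F L n Zs fref \<epsilon> w)}"
  proof safe
    fix w assume w: "w \<in> space M" "w \<notin> bad"
    then have "fstar \<in> rashomon F L n Zs fref \<epsilon> w"
      using fstar n by (intro mem_rashomon_if_sum_diff_le) (auto simp: bad_def D_def)
    then show "Inf (\<phi> ` rashomon F L n Zs fref \<epsilon> w) \<le> \<phi> fstar" "\<phi> fstar \<le> Sup (\<phi> ` rashomon F L n Zs fref \<epsilon> w)"
      using Inf_image_le_le_Sup_image_if_attained[OF _ min_ex[folded \<epsilon>_def, rule_format, OF w(1)]
          max_ex[folded \<epsilon>_def, rule_format, OF w(1)]]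
      by simp_all
  qed
  ultimately show ?thesis
    using bad_sets by (intro bexI[of _ "space M - bad"]) (auto simp: prob_compl \<epsilon>_def)
qed

end
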